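(* Let $\mu>0$, $c_0>0$, $c_1>0$, $c_2>0$. Then the equation \[ \ln\frac{1-B}{1+B} + \frac{2B}{1-B^2} = \frac{2\mu^2c_2}{c_1} \] has a unique solution $B\in(0,1)$, and, for this $B$, the equation \[ \Bigl(\frac{c_1}{2c_0} -1\Bigr) \ln\frac{1-A}{1+A} + \frac{2}{1+A} \Bigl(\frac{c_1}{2c_0} + \frac{A}{1-A} \Bigr) = \frac{c_1}{c_0(1-B^2)} \] has a unique solution $A\in(0,1)$. Moreover, if $c_1=2c_0$, then $A=B$. *)

theory Defs
  imports "HOL-Analysis.Analysis"
begin

end

(* Both left-hand sides are functions of x on (0,1) that tend to infinity as x tends to 1.
   The first, phi, vanishes at 0 and has derivative 4 x^2 / (1 - x^2)^2 > 0, so it takes every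
   positive value exactly once. With k = c1 / (2 c0) the second, psi k, equals 2 k at 0 and has
   derivative 4 (1 / (1 - x) - k) / ((1 - x) (1 + x)^2): it stays at most 2 k up to 1 - 1/k and
   increases strictly afterwards, so it takes every value above 2 k, among them 2 k / (1 - B^2),
   exactly once. For k = 1 it reduces to 2 / (1 - x^2), which forces A = B. *)

theory Submission
  imports Defs "HOL-Real_Asymp.Real_Asymp"
begin

lemma ex1_value_after_dip:
  fixes f :: "real \<Rightarrow> real"
  assumes "a \<le> s" "s < b"
    and cont: "continuous_on {a..<b} f"
    and dip: "\<And>x. a \<le> x \<Longrightarrow> x \<le> s \<Longrightarrow> f x \<le> f a"
    and mono: "strict_mono_on {s<..<b} f"
    and lim: "filterlim f at_top (at_left b)"
    and "f a < y"
  shows "\<exists>!x. x \<in> {a<..<b} \<and> f x = y"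
proof -
  have beyond_dip: "x \<in> {s<..<b}" if "x \<in> {a<..<b}" "f x = y" for x
  proof -
    have "\<not> x \<le> s"
      using dip[of x] that \<open>f a < y\<close> by auto
    with that show ?thesis
      by simp
  qed
  have "\<forall>\<^sub>F x in at_left b. y \<le> f x"
    using lim by (simp add: filterlim_at_top)
  moreover have "\<forall>\<^sub>F x in at_left b. x \<in> {a<..<b}"
    by (rule eventually_at_left_real) (use \<open>a \<le> s\<close> \<open>s < b\<close> in linarith)
  ultimately have "\<forall>\<^sub>F x in at_left b. y \<le> f x \<and> x \<in> {a<..<b}"
    by (rule eventually_conj)
  then obtain c where c: "y \<le> f c" "c \<in> {a<..<b}"
    using eventually_happens'[OF trivial_limit_at_left_real] by blast
  have "continuous_on {a..c} f"
    using c by (auto intro: continuous_on_subset[OF cont])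
  then obtain x where x: "a \<le> x" "x \<le> c" "f x = y"
    using IVT'[of f a y c] \<open>f a < y\<close> c by auto
  have sol: "x \<in> {a<..<b} \<and> f x = y"
    using x c \<open>f a < y\<close> by (cases "x = a") auto
  show ?thesis
  proof (rule ex1I[of _ x])
    fix x' assume x': "x' \<in> {a<..<b} \<and> f x' = y"
    show "x' = x"
      by (rule strict_mono_on_eqD[OF mono]) (use x' sol beyond_dip in auto)
  qed (fact sol)
qed

lemma strict_mono_on_if_deriv_pos:
  fixes f :: "real \<Rightarrow> real"
  assumes "\<And>x. x \<in> {a<..<b} \<Longrightarrow> \<exists>d. (f has_real_derivative d) (at x) \<and> d > 0"
  shows "strict_mono_on {a<..<b} f"
proof (rule strict_mono_onI)
  fix x y assume "x \<in> {a<..<b}" "y \<in> {a<..<b}" "x < y"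
  then show "f x < f y"
    by (intro DERIV_pos_imp_increasing[OF \<open>x < y\<close>] assms) auto
qed

definition phi :: "real \<Rightarrow> real" where
  "phi x = ln ((1 - x) / (1 + x)) + 2 * x / (1 - x^2)"

definition psi :: "real \<Rightarrow> real \<Rightarrow> real" where
  "psi k x = (k - 1) * ln ((1 - x) / (1 + x)) + 2 / (1 + x) * (k + x / (1 - x))"

lemma has_real_derivative_phi:
  assumes "-1 < x" "x < 1"
  shows "(phi has_real_derivative 4 * x^2 / (1 - x^2)^2) (at x)"
proof -
  have "1 - x \<noteq> 0" "1 + x \<noteq> 0" "1 - x^2 = (1 - x) * (1 + x)"
    using assms by (auto simp: algebra_simps power2_eq_square)
  then show ?thesis
    unfolding phi_def[abs_def] using assms
    by (auto intro!: derivative_eq_intros)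
      (simp add: divide_simps, simp add: algebra_simps power2_eq_square)
qed

lemma has_real_derivative_psi:
  assumes "-1 < x" "x < 1"
  shows "(psi k has_real_derivative 4 * (1 / (1 - x) - k) / ((1 - x) * (1 + x)^2)) (at x)"
proof -
  have "1 - x \<noteq> 0" "1 + x \<noteq> 0"
    using assms by auto
  then show ?thesis
    unfolding psi_def[abs_def] using assms
    by (auto intro!: derivative_eq_intros)
      (simp add: divide_simps, simp add: algebra_simps power2_eq_square)
qed

lemma continuous_on_phi: "continuous_on {0..<1} phi"
  by (intro continuous_at_imp_continuous_on ballI DERIV_isCont[OF has_real_derivative_phi]) auto

lemma continuous_on_psi: "continuous_on {0..<1} (psi k)"
  by (intro continuous_at_imp_continuous_on ballI DERIV_isCont[OF has_real_derivative_psi]) auto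

lemma eventually_ln_quotient_at_left_1:
  "\<forall>\<^sub>F x in at_left 1. ln (1 - x) - ln (1 + x) = ln ((1 - x) / (1 + x :: real))"
proof -
  have "\<forall>\<^sub>F x in at_left 1. x \<in> {0<..<1::real}"
    by (rule eventually_at_left_real) simp
  then show ?thesis
    by eventually_elim (simp add: ln_div)
qed

lemma phi_tendsto_at_left_1: "filterlim phi at_top (at_left 1)"
proof -
  have "filterlim (\<lambda>x::real. ln (1 - x) - ln (1 + x) + 2 * x / (1 - x^2)) at_top (at_left 1)"
    by real_asymp
  then show ?thesis
    unfolding phi_def[abs_def]
    by (rule filterlim_cong[THEN iffD1, OF refl refl, rotated])
      (use eventually_ln_quotient_at_left_1 in \<open>eventually_elim, simp\<close>)
qed

lemma psi_tendsto_at_left_1: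
  assumes "k > 0"
  shows "filterlim (psi k) at_top (at_left 1)"
proof -
  have "filterlim (\<lambda>x. (k - 1) * (ln (1 - x) - ln (1 + x)) + 2 / (1 + x) * (k + x / (1 - x)))
      at_top (at_left 1)"
    using assms by real_asymp
  then show ?thesis
    unfolding psi_def[abs_def]
    by (rule filterlim_cong[THEN iffD1, OF refl refl, rotated])
      (use eventually_ln_quotient_at_left_1 in \<open>eventually_elim, simp\<close>)
qed

lemma strict_mono_on_phi: "strict_mono_on {0<..<1} phi"
proof (rule strict_mono_on_if_deriv_pos)
  fix x :: real assume "x \<in> {0<..<1}"
  then have "x^2 < 1"
    by (simp add: power_less_one_iff)
  then show "\<exists>d. (phi has_real_derivative d) (at x) \<and> d > 0"
    using \<open>x \<in> {0<..<1}\<close> has_real_derivative_phi[of x] by auto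
qed

lemma ex1_phi_eq:
  assumes "y > 0"
  shows "\<exists>!x. x \<in> {0<..<1} \<and> phi x = y"
  using assms
  by (intro ex1_value_after_dip[where s = 0] continuous_on_phi strict_mono_on_phi
      phi_tendsto_at_left_1) (auto simp: phi_def)

lemma psi_0: "psi k 0 = 2 * k"
  by (simp add: psi_def)

lemma psi_le_psi_0:
  assumes "k > 0" "0 \<le> x" "x \<le> 1 - 1 / k"
  shows "psi k x \<le> psi k 0"
proof (rule DERIV_nonpos_imp_nonincreasing[OF \<open>0 \<le> x\<close>])
  fix y assume y: "0 \<le> y" "y \<le> x"
  have "0 < 1 / k" "y \<le> 1 - 1 / k"
    using assms y by auto
  then have "y < 1"
    by linarith
  moreover from \<open>y < 1\<close> \<open>y \<le> 1 - 1 / k\<close> have "1 / (1 - y) \<le> k"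
    using \<open>k > 0\<close> by (simp add: field_simps)
  ultimately show "\<exists>d. (psi k has_real_derivative d) (at y) \<and> d \<le> 0"
    using y has_real_derivative_psi[of y k] by (auto intro!: divide_nonpos_pos)
qed

lemma strict_mono_on_psi:
  assumes "k > 0"
  shows "strict_mono_on {max 0 (1 - 1 / k)<..<1} (psi k)"
proof (rule strict_mono_on_if_deriv_pos)
  fix x assume "x \<in> {max 0 (1 - 1 / k)<..<1}"
  with assms have "0 < x" "x < 1" "k < 1 / (1 - x)"
    by (auto simp: field_simps)
  then show "\<exists>d. (psi k has_real_derivative d) (at x) \<and> d > 0"
    using has_real_derivative_psi[of x k] by (auto intro!: divide_pos_pos)
qed

lemma ex1_psi_eq:
  assumes "k > 0" "y > 2 * k"
  shows "\<exists>!x. x \<in> {0<..<1} \<and> psi k x = y"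
proof (rule ex1_value_after_dip)
  show "psi k x \<le> psi k 0" if "0 \<le> x" "x \<le> max 0 (1 - 1 / k)" for x
    using that psi_le_psi_0[OF \<open>k > 0\<close>, of x] by (cases "x = 0") auto
qed (use assms in \<open>simp_all add: continuous_on_psi strict_mono_on_psi psi_tendsto_at_left_1 psi_0\<close>)

lemma psi_1: "-1 < x \<Longrightarrow> x < 1 \<Longrightarrow> psi 1 x = 2 / (1 - x^2)"
  by (simp add: psi_def field_simps power2_eq_square)

theorem lemma1:
  fixes mu c0 c1 c2 :: real
  assumes "mu > 0" and "c0 > 0" and "c1 > 0" and "c2 > 0"
  shows "(\<exists>!B. B \<in> {0<..<1} \<and>
            ln ((1 - B) / (1 + B)) + 2 * B / (1 - B^2) = 2 * mu^2 * c2 / c1)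
    \<and> (\<forall>B. B \<in> {0<..<1} \<and>
            ln ((1 - B) / (1 + B)) + 2 * B / (1 - B^2) = 2 * mu^2 * c2 / c1 \<longrightarrow>
          (\<exists>!A. A \<in> {0<..<1} \<and>
             (c1 / (2 * c0) - 1) * ln ((1 - A) / (1 + A))
               + 2 / (1 + A) * (c1 / (2 * c0) + A / (1 - A)) = c1 / (c0 * (1 - B^2)))
          \<and> (c1 = 2 * c0 \<longrightarrow>
              (\<forall>A. A \<in> {0<..<1} \<and>
                 (c1 / (2 * c0) - 1) * ln ((1 - A) / (1 + A))
                   + 2 / (1 + A) * (c1 / (2 * c0) + A / (1 - A)) = c1 / (c0 * (1 - B^2))
                 \<longrightarrow> A = B)))"
proof -
  define k where "k = c1 / (2 * c0)"
  have "k > 0"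
    using assms by (simp add: k_def)
  have rhs: "c1 / (c0 * (1 - B^2)) = 2 * k / (1 - B^2)" for B
    by (simp add: k_def)
  have k_eq_1: "c1 = 2 * c0 \<longleftrightarrow> k = 1"
    using assms by (auto simp: k_def)
  show ?thesis
    unfolding phi_def[symmetric] psi_def[symmetric] k_def[symmetric] rhs k_eq_1
  proof (intro conjI allI impI)
    show "\<exists>!B. B \<in> {0<..<1} \<and> phi B = 2 * mu^2 * c2 / c1"
      using assms by (intro ex1_phi_eq) simp
    fix B assume "B \<in> {0<..<1} \<and> phi B = 2 * mu^2 * c2 / c1"
    then have B: "B \<in> {0<..<1}" ..
    then have "0 < 1 - B^2" "1 - B^2 < 1"
      by (auto simp: power_less_one_iff)
    then have "2 * k < 2 * k / (1 - B^2)"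
      using \<open>k > 0\<close> by (simp add: field_simps)
    then show "\<exists>!A. A \<in> {0<..<1} \<and> psi k A = 2 * k / (1 - B^2)"
      using \<open>k > 0\<close> by (rule ex1_psi_eq[rotated])
    fix A assume "k = 1" "A \<in> {0<..<1} \<and> psi k A = 2 * k / (1 - B^2)"
    then show "A = B"
      using B \<open>0 < 1 - B^2\<close> by (auto simp: psi_1 power2_eq_iff_nonneg)
  qed
qed

end
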